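(* Let $L$ be a finite lattice, $a\in L$, and $\varphi\in M_1(L)$. Then $\Lambda_a\varphi\in M_1(L)$, where $\Lambda_a\varphi(x)=\varphi(x)-\lambda(\varphi;a,x)$ for $x\in L$.
   Context: $L$ is a finite lattice with join $\vee$. $M_1(L)$ is the set of nonnegative monotone real functions on $L$. A path from $a$ to $b$ in $L$ is a sequence $H=(h_0,\dots,h_m)$ of distinct elements of $L$ with $h_0=a$, $h_m=b$ ($m\ge0$), viewed as a tree with edges $\{h_{i-1},h_i\}$; for it $\varphi(H)=\sum_{i=0}^m\varphi(h_i)-\sum_{i=1}^m\varphi(h_{i-1}\vee h_i)$. $\lambda(\varphi;a,b)=\max\{\varphi(H): H\text{ a path from }a\text{ to }b\}$. *)

theory Defs
  imports Main "HOL.Real"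
begin

definition M1 :: "('a::lattice \<Rightarrow> real) \<Rightarrow> bool" where
  "M1 \<phi> \<longleftrightarrow> (\<forall>x. 0 \<le> \<phi> x) \<and> mono \<phi>"

definition is_path :: "'a list \<Rightarrow> 'a \<Rightarrow> 'a \<Rightarrow> bool" where
  "is_path H a b \<longleftrightarrow> H \<noteq> [] \<and> distinct H \<and> hd H = a \<and> last H = b"

definition path_val :: "('a::lattice \<Rightarrow> real) \<Rightarrow> 'a list \<Rightarrow> real" where
  "path_val \<phi> H = (\<Sum>i<length H. \<phi> (H ! i))
                    - (\<Sum>i\<in>{1..<length H}. \<phi> (sup (H ! (i - 1)) (H ! i)))"

definition lam :: "('a::{finite,lattice} \<Rightarrow> real) \<Rightarrow> 'a \<Rightarrow> 'a \<Rightarrow> real" where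
  "lam \<phi> a b = Max (path_val \<phi> ` {H. is_path H a b})"

definition Lambda :: "'a::{finite,lattice} \<Rightarrow> ('a \<Rightarrow> real) \<Rightarrow> 'a \<Rightarrow> real" where
  "Lambda a \<phi> x = \<phi> x - lam \<phi> a x"

end

theory Submission
  imports Defs
begin

text \<open>
  For monotone \<open>\<phi>\<close> every path value is at most \<open>\<phi>\<close> of its endpoint, since each vertex is
  cancelled by the join that follows it; this gives \<open>\<Lambda>\<^sub>a\<phi> \<ge> 0\<close>.  For \<open>x \<le> y\<close>, an optimal path
  to \<open>y\<close> becomes a path to \<open>x\<close> either by cutting it at \<open>x\<close> (the discarded tail is worth at most
  \<open>\<phi> y\<close>) or by appending \<open>x\<close> (the new join is \<open>y \<squnion> x = y\<close>), so \<open>\<lambda>(\<phi>;a,y) - \<phi> y \<le> \<lambda>(\<phi>;a,x) - \<phi> x\<close>.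
\<close>

fun path_weight :: "('a::semilattice_sup \<Rightarrow> real) \<Rightarrow> 'a list \<Rightarrow> real" where
  "path_weight f [] = 0"
| "path_weight f [x] = f x"
| "path_weight f (x # y # t) = f x - f (sup x y) + path_weight f (y # t)"

lemma path_val_eq_path_weight: "path_val f H = path_weight f H"
proof (induction f H rule: path_weight.induct)
  case (1 f) then show ?case by (simp add: path_val_def)
next
  case (2 f x) then show ?case by (simp add: path_val_def)
next
  case (3 f x y t)
  have vertices: "(\<Sum>i<length (x#y#t). f ((x#y#t) ! i)) = f x + (\<Sum>i<length (y#t). f ((y#t) ! i))"
    by (simp only: length_Cons sum.lessThan_Suc_shift) simp
  have "(\<Sum>i\<in>{1..<length (x#y#t)}. f (sup ((x#y#t) ! (i - 1)) ((x#y#t) ! i)))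
     = f (sup x y) + (\<Sum>i\<in>{Suc 1..<Suc (length (y#t))}. f (sup ((x#y#t) ! (i - 1)) ((x#y#t) ! i)))"
    by (simp add: sum.atLeast_Suc_lessThan)
  also have "(\<Sum>i\<in>{Suc 1..<Suc (length (y#t))}. f (sup ((x#y#t) ! (i - 1)) ((x#y#t) ! i)))
     = (\<Sum>i\<in>{1..<length (y#t)}. f (sup ((x#y#t) ! (Suc i - 1)) ((x#y#t) ! Suc i)))"
    by (rule sum.shift_bounds_Suc_ivl)
  also have "\<dots> = (\<Sum>i\<in>{1..<length (y#t)}. f (sup ((y#t) ! (i - 1)) ((y#t) ! i)))"
    by (rule sum.cong) (auto simp: nth_Cons split: nat.splits)
  finally have joins: "(\<Sum>i\<in>{1..<length (x#y#t)}. f (sup ((x#y#t) ! (i - 1)) ((x#y#t) ! i)))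
     = f (sup x y) + (\<Sum>i\<in>{1..<length (y#t)}. f (sup ((y#t) ! (i - 1)) ((y#t) ! i)))" .
  show ?case using 3 vertices joins by (simp only: path_val_def path_weight.simps)
qed

lemma path_weight_le_last:
  assumes "mono f" and "H \<noteq> []"
  shows "path_weight f H \<le> f (last H)"
  using assms
proof (induction f H rule: path_weight.induct)
  case (3 f x y t)
  have "f x \<le> f (sup x y)" using 3(2) by (simp add: monoD)
  with 3 show ?case by simp
qed auto

lemma path_weight_snoc:
  "H \<noteq> [] \<Longrightarrow> path_weight f (H @ [z]) = path_weight f H + f z - f (sup (last H) z)"
  by (induction f H rule: path_weight.induct) auto

lemma path_weight_append:
  "H1 \<noteq> [] \<Longrightarrow> H2 \<noteq> [] \<Longrightarrow>
   path_weight f (H1 @ H2) = path_weight f H1 + path_weight f (last H1 # H2) - f (last H1)"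
  by (induction f H1 rule: path_weight.induct) auto

lemma finite_paths: "finite {H. is_path H (a::'a::finite) b}"
proof -
  have "{H. is_path H a b} \<subseteq> {xs. set xs \<subseteq> UNIV \<and> length xs \<le> card (UNIV::'a set)}"
    by (auto simp: is_path_def dest!: distinct_card[symmetric] intro!: card_mono[OF finite_UNIV])
  moreover have "finite {xs. set xs \<subseteq> (UNIV::'a set) \<and> length xs \<le> card (UNIV::'a set)}"
    by (rule finite_lists_length_le) simp
  ultimately show ?thesis by (rule finite_subset)
qed

lemma ex_path: "\<exists>H. is_path H a b"
proof (cases "a = b")
  case True then have "is_path [a] a b" by (simp add: is_path_def)
  then show ?thesis by blast
next
  case False then have "is_path [a, b] a b" by (simp add: is_path_def)
  then show ?thesis by blast
qed

lemma path_weight_le_lam: "is_path H a b \<Longrightarrow> path_weight f H \<le> lam f a b"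
  unfolding lam_def path_val_eq_path_weight[abs_def]
  by (rule Max_ge) (auto intro: finite_paths)

lemma lam_attained:
  obtains H where "is_path H a b" "lam f a b = path_weight f H"
proof -
  have "lam f a b \<in> path_val f ` {H. is_path H a b}"
    unfolding lam_def by (rule Max_in) (use finite_paths ex_path in auto)
  then show ?thesis using that by (auto simp: path_val_eq_path_weight)
qed

lemma lam_le:
  assumes "mono \<phi>"
  shows "lam \<phi> a x \<le> \<phi> x"
proof -
  obtain H where H: "is_path H a x" "lam \<phi> a x = path_weight \<phi> H" by (rule lam_attained)
  then show ?thesis using path_weight_le_last[OF assms, of H] by (simp add: is_path_def)
qed

lemma path_to_lower:
  assumes "mono \<phi>" and "x \<le> y" and H: "is_path H a y"
  obtains H' where "is_path H' a x" "path_weight \<phi> H - \<phi> y + \<phi> x \<le> path_weight \<phi> H'"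
proof (cases "x \<in> set H")
  case True
  then obtain H1 H2 where split: "H = H1 @ x # H2" by (meson split_list)
  have prefix: "is_path (H1 @ [x]) a x" using H split by (cases H1) (auto simp: is_path_def)
  show ?thesis
  proof (cases "H2 = []")
    case True
    then have "y = x" using H split by (simp add: is_path_def)
    then show ?thesis using that prefix split True by auto
  next
    case False
    have "path_weight \<phi> H = path_weight \<phi> (H1 @ [x]) + path_weight \<phi> (x # H2) - \<phi> x"
      using path_weight_append[of "H1 @ [x]" H2 \<phi>] False split by simp
    moreover have "path_weight \<phi> (x # H2) \<le> \<phi> y"
      using path_weight_le_last[OF assms(1), of "x # H2"] H split False by (simp add: is_path_def)
    ultimately show ?thesis using that prefix by auto
  qed
next
  case False
  have extended: "is_path (H @ [x]) a x" using H False by (auto simp: is_path_def)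
  have "path_weight \<phi> (H @ [x]) = path_weight \<phi> H + \<phi> x - \<phi> (sup y x)"
    using path_weight_snoc[of H \<phi> x] H by (simp add: is_path_def)
  moreover have "sup y x = y" using \<open>x \<le> y\<close> by (simp add: sup_absorb1)
  ultimately show ?thesis using that extended by auto
qed

lemma Lambda_mono:
  assumes "mono \<phi>"
  shows "mono (Lambda a \<phi>)"
proof (rule monoI)
  fix x y :: 'a
  assume "x \<le> y"
  obtain H where H: "is_path H a y" "lam \<phi> a y = path_weight \<phi> H" by (rule lam_attained)
  obtain H' where "is_path H' a x" "path_weight \<phi> H - \<phi> y + \<phi> x \<le> path_weight \<phi> H'"
    using path_to_lower[OF assms \<open>x \<le> y\<close> H(1)] .
  with path_weight_le_lam[of H' a x \<phi>] H show "Lambda a \<phi> x \<le> Lambda a \<phi> y"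
    by (simp add: Lambda_def)
qed

theorem lemma3p11:
  fixes a :: "'a::{finite,lattice}" and \<phi> :: "'a \<Rightarrow> real"
  assumes "M1 \<phi>"
  shows "M1 (Lambda a \<phi>)"
proof -
  have "mono \<phi>" using assms by (simp add: M1_def)
  then show ?thesis
    using lam_le[of \<phi> a] Lambda_mono[of \<phi> a] by (simp add: M1_def Lambda_def)
qed

end
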